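(* Let $K=\mathbb{Z}/3$ and let $G$ be a simple graph with edges $e_1,\dots,e_s$ ($s\ge 1$). Then the set $\mathcal{T}\cup\mathcal{E}\cup\{t_s^2\}$ is a Gröbner basis of the ideal $(I(X),t_s^2)\subseteq S=K[t_1,\dots,t_s]$ with respect to the graded reverse lexicographic order on $S$ (with $t_1>t_2>\dots>t_s$).
   Context: Let $G$ be a simple graph with vertex set $\{1,\dots,n\}$ and a fixed ordering $e_1,\dots,e_s$ of its edges, $s\ge1$; edge $e_k$ is identified with the variable $t_k$ of $S=K[t_1,\dots,t_s]$. For a finite field $K$, let $X\subseteq\mathbb{P}^{s-1}$ be the image of the projective torus $\{(x_1:\dots:x_n): x_i\neq0 \ \forall i\}\subseteq\mathbb{P}^{n-1}$ under the map whose $k$-th coordinate is $x_ix_j$ when $e_k=\{i,j\}$ (the projective algebraic toric set parameterized by the edges of $G$). $I(X)\subseteq S$ is the ideal generated by the homogeneous polynomials vanishing on all points of $X$. For $\alpha\in\mathbb{N}^s$ write $t^\alpha=t_1^{\alpha_1}\cdots t_s^{\alpha_s}$. An Eulerian subgraph is a subgraph in which every vertex has even degree. A binomial $t^\alpha-t^\beta$ is an Eulerian binomial if $t^\alpha,t^\beta$ are relatively prime, square-free, of the same degree, and the edges $\{e_i: i\in\operatorname{supp}(\alpha)\cup\operatorname{supp}(\beta)\}$ form an Eulerian subgraph of $G$. $\mathcal{E}$ denotes the set of all Eulerian binomials and $\mathcal{T}=\{t_i^2-t_j^2: 1\le i,j\le s\}$. *)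

theory Defs
  imports "HOL-Library.Poly_Mapping" "HOL-Library.Numeral_Type"
begin

text \<open>Polynomials over K = Z/3 (the numeral type 3) in variables t_k indexed by naturals;
 the ring S = K[t_1,...,t_s] is the set of polynomials whose variables lie in {1..s}.\<close>

type_synonym poly3 = "(nat \<Rightarrow>\<^sub>0 nat) \<Rightarrow>\<^sub>0 3"

definition var :: "nat \<Rightarrow> poly3" where
  "var k = Poly_Mapping.single (Poly_Mapping.single k 1) 1"

definition in_S :: "nat \<Rightarrow> poly3 \<Rightarrow> bool" where
  "in_S s (f::poly3) \<longleftrightarrow> (\<forall>m \<in> Poly_Mapping.keys f. Poly_Mapping.keys m \<subseteq> {1..s})"

definition mdeg :: "(nat \<Rightarrow>\<^sub>0 nat) \<Rightarrow> nat" where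
  "mdeg m = (\<Sum>i\<in>Poly_Mapping.keys m. Poly_Mapping.lookup m i)"

definition homogeneous :: "poly3 \<Rightarrow> bool" where
  "homogeneous f \<longleftrightarrow> (\<forall>m\<in>Poly_Mapping.keys f. \<forall>m'\<in>Poly_Mapping.keys f. mdeg m = mdeg m')"

definition eval :: "poly3 \<Rightarrow> (nat \<Rightarrow> 3) \<Rightarrow> 3" where
  "eval f v = (\<Sum>m\<in>Poly_Mapping.keys f. Poly_Mapping.lookup f m * (\<Prod>i\<in>Poly_Mapping.keys m. v i ^ Poly_Mapping.lookup m i))"

inductive_set ideal_in :: "nat \<Rightarrow> poly3 set \<Rightarrow> poly3 set" for s B where
  zero: "0 \<in> ideal_in s B"
| gen: "b \<in> B \<Longrightarrow> b \<in> ideal_in s B"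
| add: "f \<in> ideal_in s B \<Longrightarrow> g \<in> ideal_in s B \<Longrightarrow> f + g \<in> ideal_in s B"
| mult: "in_S s h \<Longrightarrow> f \<in> ideal_in s B \<Longrightarrow> h * f \<in> ideal_in s B"

text \<open>Points of X (affine representatives): coordinate k is x_i x_j for e_k = {i,j},
 with x_i nonzero for all vertices i in {1..n}.\<close>
definition toric_points :: "nat \<Rightarrow> (nat \<Rightarrow> nat set) \<Rightarrow> nat \<Rightarrow> (nat \<Rightarrow> 3) set" where
  "toric_points n e s = {(\<lambda>k. \<Prod>i\<in>e k. x i) | x. \<forall>i\<in>{1..n}. x i \<noteq> 0}"

definition vanishing_ideal :: "nat \<Rightarrow> (nat \<Rightarrow> nat set) \<Rightarrow> nat \<Rightarrow> poly3 set" where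
  "vanishing_ideal n e s = ideal_in s {f. in_S s f \<and> homogeneous f \<and>
      (\<forall>p\<in>toric_points n e s. eval f p = 0)}"

definition grevlex_less :: "(nat \<Rightarrow>\<^sub>0 nat) \<Rightarrow> (nat \<Rightarrow>\<^sub>0 nat) \<Rightarrow> bool" where
  "grevlex_less m m' \<longleftrightarrow> mdeg m < mdeg m' \<or>
     (mdeg m = mdeg m' \<and> (\<exists>k. Poly_Mapping.lookup m' k < Poly_Mapping.lookup m k \<and> (\<forall>j>k. Poly_Mapping.lookup m j = Poly_Mapping.lookup m' j)))"

definition lead_mon :: "poly3 \<Rightarrow> (nat \<Rightarrow>\<^sub>0 nat)" where
  "lead_mon f = (THE m. m \<in> Poly_Mapping.keys f \<and> (\<forall>m'\<in>Poly_Mapping.keys f. m' = m \<or> grevlex_less m' m))"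

definition mon_dvd :: "(nat \<Rightarrow>\<^sub>0 nat) \<Rightarrow> (nat \<Rightarrow>\<^sub>0 nat) \<Rightarrow> bool" where
  "mon_dvd a b \<longleftrightarrow> (\<forall>i. Poly_Mapping.lookup a i \<le> Poly_Mapping.lookup b i)"

definition is_groebner_basis :: "poly3 set \<Rightarrow> poly3 set \<Rightarrow> bool" where
  "is_groebner_basis G I \<longleftrightarrow> G \<subseteq> I \<and>
     (\<forall>f\<in>I. f \<noteq> 0 \<longrightarrow> (\<exists>g\<in>G. g \<noteq> 0 \<and> mon_dvd (lead_mon g) (lead_mon f)))"

definition T_set :: "nat \<Rightarrow> poly3 set" where
  "T_set s = {var i ^ 2 - var j ^ 2 | i j. i \<in> {1..s} \<and> j \<in> {1..s}}"

text \<open>Eulerian binomials: t^A - t^B with A, B disjoint (relatively prime), square-free monomials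
 (indicator sets A, B \<subseteq> {1..s}), same degree, and edges indexed by A \<union> B forming a subgraph
 in which every vertex has even degree.\<close>
definition eulerian_binomials :: "nat \<Rightarrow> (nat \<Rightarrow> nat set) \<Rightarrow> nat \<Rightarrow> poly3 set" where
  "eulerian_binomials n e s = {(\<Prod>i\<in>A. var i) - (\<Prod>i\<in>B. var i) | A B.
      A \<subseteq> {1..s} \<and> B \<subseteq> {1..s} \<and> A \<inter> B = {} \<and> card A = card B \<and>
      (\<forall>v. even (card {k \<in> A \<union> B. v \<in> e k}))}"

end

theory Submission
  imports Defs "HOL-Library.FuncSet"
begin

text \<open>
  Over \<int>/3 every nonzero coordinate squares to 1, so at the point of X given by a sign vector
  x \<in> {1,-1}^n a monomial t^m takes the value \<Prod>(x_v : v \<in> O(m)),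
  where O(m) is the set of vertices of odd degree in the multigraph with edge multiplicities m.
  By orthogonality of characters, a homogeneous polynomial vanishing on X has zero coefficient sum
  over the monomials of any class {m. O(m) = U, deg m = d}. Call a class non-squarefree if it
  contains a non-squarefree monomial. The vanishing of the coefficient sums over all other classes
  survives sums and multiples and holds for t_s^2, hence for every f in (I(X), t_s^2).

  Now let t^C be the leading monomial of such an f. If it is not squarefree, the leading monomial
  t_i^2 of t_i^2 - t_s^2 or of t_s^2 divides it. If it is squarefree, its class contains either a
  non-squarefree monomial, whose odd exponents form a set D with |D| < |C| of the same parity, or
  another squarefree monomial t^D smaller than t^C. Either way every vertex lies on equally many
  edges of C and of D modulo 2, so splitting the symmetric difference of C and D into halves
  A \<subseteq> C and B of equal size, with its largest index in B, gives an Eulerian binomial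
  t^A - t^B whose leading monomial t^A divides t^C.
\<close>

abbreviation lookup :: "('a \<Rightarrow>\<^sub>0 'b::zero) \<Rightarrow> 'a \<Rightarrow> 'b" where
  "lookup \<equiv> Poly_Mapping.lookup"

abbreviation keys :: "('a \<Rightarrow>\<^sub>0 'b::zero) \<Rightarrow> 'a set" where
  "keys \<equiv> Poly_Mapping.keys"

section \<open>The graded reverse lexicographic order\<close>

lemma grevlex_less_asym:
  assumes "grevlex_less a b" shows "\<not> grevlex_less b a"
proof
  assume ba: "grevlex_less b a"
  show False
  proof (cases "mdeg a = mdeg b")
    case False then show ?thesis using assms ba unfolding grevlex_less_def by auto
  next
    case True
    obtain k1 where k1: "lookup b k1 < lookup a k1" "\<forall>j>k1. lookup a j = lookup b j"
      using assms True unfolding grevlex_less_def by auto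
    obtain k2 where k2: "lookup a k2 < lookup b k2" "\<forall>j>k2. lookup b j = lookup a j"
      using ba True unfolding grevlex_less_def by auto
    show False
    proof (cases k1 k2 rule: linorder_cases)
      case less then show False using k1(2) k2(1) by auto
    next
      case equal then show False using k1(1) k2(1) by simp
    next
      case greater then show False using k1(1) k2(2) by auto
    qed
  qed
qed

lemma grevlex_less_trans:
  assumes "grevlex_less a b" "grevlex_less b c" shows "grevlex_less a c"
proof (cases "mdeg a < mdeg b \<or> mdeg b < mdeg c")
  case True
  then show ?thesis using assms unfolding grevlex_less_def by auto
next
  case False
  then have deg: "mdeg a = mdeg b" "mdeg b = mdeg c" using assms unfolding grevlex_less_def by auto
  obtain k1 where k1: "lookup b k1 < lookup a k1" "\<forall>j>k1. lookup a j = lookup b j"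
    using assms(1) deg unfolding grevlex_less_def by auto
  obtain k2 where k2: "lookup c k2 < lookup b k2" "\<forall>j>k2. lookup b j = lookup c j"
    using assms(2) deg unfolding grevlex_less_def by auto
  have "\<exists>k. lookup c k < lookup a k \<and> (\<forall>j>k. lookup a j = lookup c j)"
  proof (cases "k1 \<le> k2")
    case True
    then show ?thesis using k1 k2 by (intro exI[of _ k2]) (auto simp: le_less)
  next
    case False
    then show ?thesis using k1 k2 by (intro exI[of _ k1]) auto
  qed
  then show ?thesis using deg unfolding grevlex_less_def by auto
qed

lemma grevlex_less_total:
  assumes "a \<noteq> b" shows "grevlex_less a b \<or> grevlex_less b a"
proof (cases "mdeg a = mdeg b")
  case False then show ?thesis unfolding grevlex_less_def by auto
next
  case True
  let ?D = "{k. lookup a k \<noteq> lookup b k}"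
  have fin: "finite ?D"
    by (rule finite_subset[of _ "keys a \<union> keys b"]) (auto simp: in_keys_iff)
  have "?D \<noteq> {}"
  proof
    assume "?D = {}"
    then have "a = b" by (intro poly_mapping_eqI) auto
    with assms show False ..
  qed
  define k where "k = Max ?D"
  have k: "lookup a k \<noteq> lookup b k"
    using Max_in[OF fin] \<open>?D \<noteq> {}\<close> unfolding k_def by blast
  have above: "\<forall>j>k. lookup a j = lookup b j"
    using Max_ge[OF fin] unfolding k_def by (meson leD mem_Collect_eq)
  show ?thesis
  proof (cases "lookup a k < lookup b k")
    case True
    moreover have "\<forall>j>k. lookup b j = lookup a j" using above by simp
    ultimately show ?thesis using \<open>mdeg a = mdeg b\<close> unfolding grevlex_less_def by auto
  next
    case False
    then have "lookup b k < lookup a k" using k by simp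
    then show ?thesis using \<open>mdeg a = mdeg b\<close> above unfolding grevlex_less_def by auto
  qed
qed

lemma lead_mon_eqI:
  assumes "m \<in> keys f" "\<forall>m'\<in>keys f. m' = m \<or> grevlex_less m' m"
  shows "lead_mon f = m"
  unfolding lead_mon_def
proof (rule the_equality)
  show "m \<in> keys f \<and> (\<forall>m'\<in>keys f. m' = m \<or> grevlex_less m' m)" using assms ..
next
  fix x assume x: "x \<in> keys f \<and> (\<forall>m'\<in>keys f. m' = x \<or> grevlex_less m' x)"
  show "x = m"
  proof (rule ccontr)
    assume "x \<noteq> m"
    then have "grevlex_less x m" "grevlex_less m x" using x assms by auto
    then show False using grevlex_less_asym by blast
  qed
qed

lemma finite_has_grevlex_max:
  assumes "finite M" "M \<noteq> {}"
  shows "\<exists>m\<in>M. \<forall>m'\<in>M. m' = m \<or> grevlex_less m' m"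
  using assms
proof (induction M rule: finite_ne_induct)
  case (singleton x) then show ?case by auto
next
  case (insert x F)
  then obtain m where m: "m \<in> F" "\<forall>m'\<in>F. m' = m \<or> grevlex_less m' m" by auto
  show ?case
  proof (cases "grevlex_less m x")
    case True
    then show ?thesis using m grevlex_less_trans by (intro bexI[of _ x]) auto
  next
    case False
    then show ?thesis using m grevlex_less_total by (intro bexI[of _ m]) auto
  qed
qed

lemma
  assumes "f \<noteq> 0"
  shows lead_mon_in_keys: "lead_mon f \<in> keys f"
    and lead_mon_greatest: "m \<in> keys f \<Longrightarrow> m \<noteq> lead_mon f \<Longrightarrow> grevlex_less m (lead_mon f)"
proof -
  obtain m where "m \<in> keys f" "\<forall>m'\<in>keys f. m' = m \<or> grevlex_less m' m"
    using finite_has_grevlex_max[of "keys f"] assms by auto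
  with lead_mon_eqI show "lead_mon f \<in> keys f"
    and "m \<in> keys f \<Longrightarrow> m \<noteq> lead_mon f \<Longrightarrow> grevlex_less m (lead_mon f)" for m
    by metis+
qed

definition mon_of_set :: "nat set \<Rightarrow> (nat \<Rightarrow>\<^sub>0 nat)" where
  "mon_of_set A = (\<Sum>i\<in>A. Poly_Mapping.single i 1)"

lemma lookup_mon_of_set: "finite A \<Longrightarrow> lookup (mon_of_set A) i = (if i \<in> A then 1 else 0)"
  unfolding mon_of_set_def by (simp add: lookup_sum lookup_single when_def)

lemma keys_mon_of_set: "finite A \<Longrightarrow> keys (mon_of_set A) = A"
  by (auto simp: in_keys_iff lookup_mon_of_set split: if_splits)

lemma prod_var_eq_single: "finite A \<Longrightarrow> (\<Prod>i\<in>A. var i) = Poly_Mapping.single (mon_of_set A) 1"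
  by (induction A rule: finite_induct) (simp_all add: mon_of_set_def var_def mult_single add.commute)

lemma var_power2: "var i ^ 2 = Poly_Mapping.single (Poly_Mapping.single i 2) 1"
  by (simp add: var_def power2_eq_square mult_single single_add[symmetric]; simp add: numeral_2_eq_2)

lemma mdeg_eq_sum: "finite K \<Longrightarrow> keys m \<subseteq> K \<Longrightarrow> mdeg m = (\<Sum>i\<in>K. lookup m i)"
  unfolding mdeg_def by (rule sum.mono_neutral_left) (auto simp: in_keys_iff)

lemma mdeg_add: "mdeg (a + b) = mdeg a + mdeg b"
proof -
  let ?K = "keys a \<union> keys b"
  have "mdeg (a + b) = (\<Sum>i\<in>?K. lookup (a + b) i)"
    by (rule mdeg_eq_sum) (use keys_add[of a b] in auto)
  also have "\<dots> = mdeg a + mdeg b"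
    by (simp add: lookup_add sum.distrib mdeg_eq_sum[of ?K])
  finally show ?thesis .
qed

lemma mdeg_single [simp]: "mdeg (Poly_Mapping.single i k) = k"
  unfolding mdeg_def by simp

lemma mdeg_mon_of_set: "finite A \<Longrightarrow> mdeg (mon_of_set A) = card A"
  by (simp add: mdeg_def keys_mon_of_set lookup_mon_of_set)

definition squarefree_mon :: "(nat \<Rightarrow>\<^sub>0 nat) \<Rightarrow> bool" where
  "squarefree_mon m \<longleftrightarrow> (\<forall>i. lookup m i \<le> 1)"

lemma squarefree_mon_eq_mon_of_set:
  assumes "squarefree_mon m" shows "m = mon_of_set (keys m)"
proof (rule poly_mapping_eqI)
  fix k
  from assms have "lookup m k \<le> 1" by (simp add: squarefree_mon_def)
  then show "lookup m k = lookup (mon_of_set (keys m)) k"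
    by (cases "lookup m k") (auto simp: lookup_mon_of_set in_keys_iff)
qed

lemma squarefree_mon_mon_of_set: "finite A \<Longrightarrow> squarefree_mon (mon_of_set A)"
  by (simp add: squarefree_mon_def lookup_mon_of_set)

lemma not_squarefree_mon_add: "\<not> squarefree_mon a \<Longrightarrow> \<not> squarefree_mon (a + b)"
  unfolding squarefree_mon_def by (auto simp: lookup_add) (meson le_add1 le_trans)

definition mon_in_S :: "nat \<Rightarrow> (nat \<Rightarrow>\<^sub>0 nat) \<Rightarrow> bool" where
  "mon_in_S s m \<longleftrightarrow> keys m \<subseteq> {1..s}"

lemma in_S_iff_mon_in_S: "in_S s f \<longleftrightarrow> (\<forall>m\<in>keys f. mon_in_S s m)"
  unfolding in_S_def mon_in_S_def ..

lemma mon_in_S_add: "mon_in_S s a \<Longrightarrow> mon_in_S s b \<Longrightarrow> mon_in_S s (a + b)"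
  unfolding mon_in_S_def using keys_add[of a b] by auto

lemma mdeg_mon_in_S: "mon_in_S s m \<Longrightarrow> mdeg m = (\<Sum>i\<in>{1..s}. lookup m i)"
  unfolding mon_in_S_def by (rule mdeg_eq_sum) auto

lemma in_S_add: "in_S s f \<Longrightarrow> in_S s g \<Longrightarrow> in_S s (f + g)"
  unfolding in_S_def using keys_add[of f g] by blast

lemma in_S_mult: "in_S s h \<Longrightarrow> in_S s f \<Longrightarrow> in_S s (h * f)"
  unfolding in_S_iff_mon_in_S using keys_mult[of h f] mon_in_S_add by blast

lemma keys_binomial:
  "a \<noteq> b \<Longrightarrow> keys (Poly_Mapping.single a (1::3) - Poly_Mapping.single b 1) = {a, b}"
  by (auto simp: in_keys_iff lookup_minus lookup_single when_def split: if_splits)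

lemma binomial_nonzero: "a \<noteq> b \<Longrightarrow> Poly_Mapping.single a (1::3) - Poly_Mapping.single b 1 \<noteq> 0"
  using keys_binomial by fastforce

lemma lead_mon_binomial:
  "a \<noteq> b \<Longrightarrow> grevlex_less b a \<Longrightarrow> lead_mon (Poly_Mapping.single a (1::3) - Poly_Mapping.single b 1) = a"
  by (rule lead_mon_eqI) (auto simp: keys_binomial)

lemma lead_mon_single: "lead_mon (Poly_Mapping.single a (1::3)) = a"
  by (rule lead_mon_eqI) auto

section \<open>Odd vertices of a monomial\<close>

definition vertex_degree :: "(nat \<Rightarrow> nat set) \<Rightarrow> nat \<Rightarrow> nat \<Rightarrow> (nat \<Rightarrow>\<^sub>0 nat) \<Rightarrow> nat" where
  "vertex_degree e s v m = (\<Sum>i\<in>{1..s}. if v \<in> e i then lookup m i else 0)"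

definition odd_vertices :: "(nat \<Rightarrow> nat set) \<Rightarrow> nat \<Rightarrow> (nat \<Rightarrow>\<^sub>0 nat) \<Rightarrow> nat set" where
  "odd_vertices e s m = {v. odd (vertex_degree e s v m)}"

definition odd_exponents :: "nat \<Rightarrow> (nat \<Rightarrow>\<^sub>0 nat) \<Rightarrow> nat set" where
  "odd_exponents s m = {i\<in>{1..s}. odd (lookup m i)}"

lemma even_sum_iff_even_card_odd:
  "finite I \<Longrightarrow> even (sum (g :: _ \<Rightarrow> nat) I) \<longleftrightarrow> even (card {i\<in>I. odd (g i)})"
proof (induction I rule: finite_induct)
  case (insert x F)
  have "{i\<in>insert x F. odd (g i)} =
      (if odd (g x) then insert x {i\<in>F. odd (g i)} else {i\<in>F. odd (g i)})"
    by auto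
  then show ?case using insert by auto
qed simp

lemma odd_vertices_add: "odd_vertices e s (a + b) = sym_diff (odd_vertices e s a) (odd_vertices e s b)"
proof -
  have "vertex_degree e s v (a + b) = vertex_degree e s v a + vertex_degree e s v b" for v
    unfolding vertex_degree_def sum.distrib[symmetric] by (rule sum.cong) (auto simp: lookup_add)
  then show ?thesis unfolding odd_vertices_def by auto
qed

lemma even_vertex_degree_iff:
  "even (vertex_degree e s v m) \<longleftrightarrow> even (card {k\<in>odd_exponents s m. v \<in> e k})"
proof -
  have "{i\<in>{1..s}. odd (if v \<in> e i then lookup m i else 0)} = {k\<in>odd_exponents s m. v \<in> e k}"
    unfolding odd_exponents_def by auto
  then show ?thesis
    unfolding vertex_degree_def by (subst even_sum_iff_even_card_odd) simp_all
qed

lemma odd_vertices_eq_imp_parities_eq: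
  "odd_vertices e s m = odd_vertices e s m' \<Longrightarrow>
    even (card {k\<in>odd_exponents s m. v \<in> e k}) \<longleftrightarrow> even (card {k\<in>odd_exponents s m'. v \<in> e k})"
  unfolding odd_vertices_def set_eq_iff even_vertex_degree_iff[symmetric] by simp

lemma even_mdeg_iff: "mon_in_S s m \<Longrightarrow> even (mdeg m) \<longleftrightarrow> even (card (odd_exponents s m))"
  unfolding odd_exponents_def by (simp add: mdeg_mon_in_S even_sum_iff_even_card_odd)

lemma card_odd_exponents_less:
  assumes "mon_in_S s m" "\<not> squarefree_mon m"
  shows "card (odd_exponents s m) < mdeg m"
proof -
  obtain i where i: "lookup m i > 1" using assms(2) unfolding squarefree_mon_def by (auto simp: not_le)
  then have "i \<in> keys m" by (auto simp: in_keys_iff)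
  then have "i \<in> {1..s}" using assms(1) unfolding mon_in_S_def by auto
  have "card (odd_exponents s m) = (\<Sum>j\<in>{1..s}. if odd (lookup m j) then 1 else 0)"
    using sum.inter_filter[of "{1..s}" "\<lambda>_. 1::nat" "\<lambda>j. odd (lookup m j)"]
    unfolding odd_exponents_def by simp
  also have "\<dots> < (\<Sum>j\<in>{1..s}. lookup m j)"
  proof (rule sum_strict_mono_ex1)
    show "\<forall>j\<in>{1..s}. (if odd (lookup m j) then 1 else 0) \<le> lookup m j"
      by (auto simp: Suc_le_eq odd_pos)
    show "\<exists>j\<in>{1..s}. (if odd (lookup m j) then 1 else 0) < lookup m j"
      using i \<open>i \<in> {1..s}\<close> by (intro bexI[of _ i]) auto
  qed simp
  finally show ?thesis using mdeg_mon_in_S[OF assms(1)] by simp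
qed

lemma odd_exponents_squarefree:
  assumes "mon_in_S s m" "squarefree_mon m"
  shows "odd_exponents s m = keys m"
proof -
  have "i \<in> odd_exponents s m \<longleftrightarrow> i \<in> keys m" for i
  proof -
    have "lookup m i \<le> 1" using assms(2) squarefree_mon_def by auto
    moreover have "lookup m i \<noteq> 0 \<Longrightarrow> i \<in> {1..s}"
      using assms(1) unfolding mon_in_S_def by (metis in_keys_iff subsetD)
    ultimately show ?thesis unfolding odd_exponents_def in_keys_iff by (cases "lookup m i") auto
  qed
  then show ?thesis by blast
qed

lemma odd_vertices_subset:
  assumes "\<forall>k\<in>{1..s}. e k \<subseteq> {1..n}" shows "odd_vertices e s m \<subseteq> {1..n}"
proof
  fix v assume "v \<in> odd_vertices e s m"
  then have "vertex_degree e s v m \<noteq> 0" unfolding odd_vertices_def by (cases "vertex_degree e s v m") auto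
  then have "\<exists>i\<in>{1..s}. v \<in> e i"
    unfolding vertex_degree_def by (rule contrapos_np) (intro sum.neutral, auto)
  then show "v \<in> {1..n}" using assms by blast
qed

lemma odd_vertices_mon_of_set:
  assumes "A \<subseteq> {1..s}"
  shows "v \<in> odd_vertices e s (mon_of_set A) \<longleftrightarrow> odd (card {k\<in>A. v \<in> e k})"
proof -
  have "finite A" using assms finite_subset by blast
  then have "odd_exponents s (mon_of_set A) = A"
    using assms odd_exponents_squarefree[of s "mon_of_set A"]
    by (simp add: mon_in_S_def keys_mon_of_set squarefree_mon_mon_of_set)
  then show ?thesis unfolding odd_vertices_def by (simp add: even_vertex_degree_iff)
qed

section \<open>Evaluation on the torus\<close>

definition mon_eval :: "(nat \<Rightarrow>\<^sub>0 nat) \<Rightarrow> (nat \<Rightarrow> 3) \<Rightarrow> 3" where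
  "mon_eval m p = (\<Prod>i\<in>keys m. p i ^ lookup m i)"

definition edge_point :: "(nat \<Rightarrow> nat set) \<Rightarrow> (nat \<Rightarrow> 3) \<Rightarrow> nat \<Rightarrow> 3" where
  "edge_point e x = (\<lambda>k. \<Prod>i\<in>e k. x i)"

lemma eval_eq_sum: "finite M \<Longrightarrow> keys f \<subseteq> M \<Longrightarrow> eval f p = (\<Sum>m\<in>M. lookup f m * mon_eval m p)"
  unfolding eval_def mon_eval_def by (rule sum.mono_neutral_left) (auto simp: in_keys_iff)

lemma power_eq_if_odd:
  assumes "(x :: 'a :: monoid_mult) ^ 2 = 1" shows "x ^ k = (if odd k then x else 1)"
proof -
  have "x ^ k = (x ^ 2) ^ (k div 2) * x ^ (k mod 2)"
    by (metis div_mult_mod_eq mult.commute power_add power_mult)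
  then show ?thesis using assms by (simp add: odd_iff_mod_2_eq_one even_iff_mod_2_eq_zero)
qed

lemma Z3_power2_eq_1: "(y :: 3) \<noteq> 0 \<Longrightarrow> y ^ 2 = 1"
proof (cases y)
  case (of_int z)
  then have "z = 0 \<or> z = 1 \<or> z = 2" by auto
  then show "y \<noteq> 0 \<Longrightarrow> y ^ 2 = 1" using of_int by auto
qed

lemma toric_pointsE:
  assumes "p \<in> toric_points n e s"
  obtains x where "p = edge_point e x" "\<forall>v\<in>{1..n}. x v ^ 2 = 1"
proof -
  obtain x where "p = (\<lambda>k. \<Prod>i\<in>e k. x i)" "\<forall>i\<in>{1..n}. x i \<noteq> 0"
    using assms unfolding toric_points_def by blast
  then show ?thesis using that[of x] Z3_power2_eq_1 unfolding edge_point_def by blast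
qed

lemma mon_eval_edge_point:
  assumes E: "\<forall>k\<in>{1..s}. e k \<subseteq> {1..n}" and x: "\<forall>v\<in>{1..n}. x v ^ 2 = 1" and m: "mon_in_S s m"
  shows "mon_eval m (edge_point e x) = (\<Prod>v\<in>odd_vertices e s m. x v)"
proof -
  have "mon_eval m (edge_point e x) = (\<Prod>i\<in>{1..s}. (\<Prod>v\<in>e i. x v) ^ lookup m i)"
    unfolding mon_eval_def edge_point_def
    by (rule prod.mono_neutral_left) (use m in \<open>auto simp: mon_in_S_def in_keys_iff\<close>)
  also have "\<dots> = (\<Prod>i\<in>{1..s}. \<Prod>v\<in>{1..n}. x v ^ (if v \<in> e i then lookup m i else 0))"
  proof (rule prod.cong[OF refl])
    fix i assume "i \<in> {1..s}"
    show "(\<Prod>v\<in>e i. x v) ^ lookup m i = (\<Prod>v\<in>{1..n}. x v ^ (if v \<in> e i then lookup m i else 0))"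
      unfolding prod_power_distrib
      by (rule prod.mono_neutral_cong_left) (use E \<open>i \<in> {1..s}\<close> in auto)
  qed
  also have "\<dots> = (\<Prod>v\<in>{1..n}. x v ^ vertex_degree e s v m)"
    unfolding vertex_degree_def by (subst prod.swap) (simp add: power_sum)
  also have "\<dots> = (\<Prod>v\<in>{1..n}. if odd (vertex_degree e s v m) then x v else 1)"
    by (rule prod.cong[OF refl]) (use x power_eq_if_odd in blast)
  also have "\<dots> = (\<Prod>v\<in>{v\<in>{1..n}. odd (vertex_degree e s v m)}. x v)"
    by (rule prod.inter_filter[symmetric]) simp
  also have "{v\<in>{1..n}. odd (vertex_degree e s v m)} = odd_vertices e s m"
    using odd_vertices_subset[OF E, of m] unfolding odd_vertices_def by auto
  finally show ?thesis .
qed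

definition sign_vectors :: "nat \<Rightarrow> (nat \<Rightarrow> 'a::comm_ring_1) set" where
  "sign_vectors n = PiE {1..n} (\<lambda>_. {1, -1})"

lemma sum_sign_vectors_prod:
  assumes U: "U \<subseteq> {1..n}" and char: "(1 :: 'a :: comm_ring_1) \<noteq> -1"
  shows "(\<Sum>x\<in>sign_vectors n. \<Prod>v\<in>U. x v) = (if U = {} then 2 ^ n else (0 :: 'a))"
proof -
  let ?f = "\<lambda>v y. if v \<in> U then y else (1::'a)"
  have "(\<Sum>x\<in>sign_vectors n. \<Prod>v\<in>U. x v) = (\<Sum>x\<in>sign_vectors n. \<Prod>v\<in>{1..n}. ?f v (x v))"
    by (intro sum.cong refl prod.mono_neutral_cong_left) (use U in auto)
  also have "\<dots> = (\<Prod>v\<in>{1..n}. \<Sum>y\<in>{1, -1}. ?f v y)"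
    unfolding sign_vectors_def by (rule prod_sum_PiE[symmetric]) auto
  also have "\<dots> = (\<Prod>v\<in>{1..n}. if v \<in> U then 0 else 2)"
    by (rule prod.cong[OF refl]) (simp add: char)
  also have "\<dots> = (if U = {} then 2 ^ n else 0)"
    using U by (cases "U = {}") (auto intro!: prod_zero)
  finally show ?thesis .
qed

lemma prod_mult_prod_eq_prod_sym_diff:
  fixes x :: "'a \<Rightarrow> 'b :: comm_monoid_mult"
  assumes "finite S" "finite T" "\<forall>v\<in>S \<inter> T. x v * x v = 1"
  shows "prod x S * prod x T = prod x (sym_diff S T)"
proof -
  have "prod x S * prod x T = prod x (S - T) * prod x (T - S) * (\<Prod>v\<in>S \<inter> T. x v * x v)"
    using assms(1,2) prod.subset_diff[of "S \<inter> T" S x] prod.subset_diff[of "S \<inter> T" T x]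
    by (simp add: Diff_Int Int_commute prod.distrib ac_simps)
  also have "\<dots> = prod x (sym_diff S T)"
    using assms by (subst prod.union_disjoint) auto
  finally show ?thesis .
qed

lemma eval_edge_point:
  assumes E: "\<forall>k\<in>{1..s}. e k \<subseteq> {1..n}" and q: "in_S s q" and x: "\<forall>v\<in>{1..n}. x v ^ 2 = 1"
  shows "eval q (edge_point e x) = (\<Sum>m\<in>keys q. lookup q m * (\<Prod>v\<in>odd_vertices e s m. x v))"
  using q by (simp add: eval_eq_sum[of "keys q"] mon_eval_edge_point[OF E x] in_S_iff_mon_in_S)

text \<open>Multiply by the character of U and sum over all sign vectors; only the monomials with
  odd vertex set U survive, each weighted by 2^n, a unit of \<int>/3.\<close>

lemma vanishing_sum_coeffs_odd_vertices:
  assumes E: "\<forall>k\<in>{1..s}. e k \<subseteq> {1..n}" and q: "in_S s q"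
    and van: "\<forall>p\<in>toric_points n e s. eval q p = 0"
  shows "(\<Sum>m\<in>keys q. if odd_vertices e s m = U then lookup q m else 0) = 0"
proof (cases "U \<subseteq> {1..n}")
  case False
  then have "odd_vertices e s m \<noteq> U" for m using odd_vertices_subset[OF E] by blast
  then show ?thesis by simp
next
  case U: True
  have ov: "odd_vertices e s m \<subseteq> {1..n}" for m using odd_vertices_subset[OF E] .
  have fin: "finite (odd_vertices e s m)" for m using ov finite_subset by blast
  let ?c = "\<Sum>m\<in>keys q. if odd_vertices e s m = U then lookup q m else 0"
  have "(0::3) = (\<Sum>x\<in>sign_vectors n. (\<Prod>v\<in>U. x v) * eval q (edge_point e x))"
  proof -
    have "edge_point e x \<in> toric_points n e s" if "x \<in> sign_vectors n" for x
      using that unfolding sign_vectors_def toric_points_def edge_point_def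
      by (auto simp: PiE_iff intro!: exI[of _ x])
    then show ?thesis using van by simp
  qed
  also have "\<dots> = (\<Sum>x\<in>sign_vectors n. \<Sum>m\<in>keys q. lookup q m * (\<Prod>v\<in>sym_diff U (odd_vertices e s m). x v))"
  proof (rule sum.cong[OF refl])
    fix x :: "nat \<Rightarrow> 3" assume "x \<in> sign_vectors n"
    then have x: "\<forall>v\<in>{1..n}. x v ^ 2 = 1"
      unfolding sign_vectors_def by (auto simp: PiE_iff power2_eq_square)
    have "(\<Prod>v\<in>U. x v) * (\<Prod>v\<in>odd_vertices e s m. x v) = (\<Prod>v\<in>sym_diff U (odd_vertices e s m). x v)" for m
      using x U ov[of m] fin[of m] finite_subset[OF U]
      by (intro prod_mult_prod_eq_prod_sym_diff) (auto simp: power2_eq_square)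
    then show "(\<Prod>v\<in>U. x v) * eval q (edge_point e x) =
        (\<Sum>m\<in>keys q. lookup q m * (\<Prod>v\<in>sym_diff U (odd_vertices e s m). x v))"
      unfolding eval_edge_point[OF E q x] sum_distrib_left
      by (intro sum.cong refl) (metis mult.left_commute)
  qed
  also have "\<dots> = (\<Sum>m\<in>keys q. lookup q m * (\<Sum>x\<in>sign_vectors n. \<Prod>v\<in>sym_diff U (odd_vertices e s m). x v))"
    by (subst sum.swap) (simp add: sum_distrib_left)
  also have "\<dots> = (\<Sum>m\<in>keys q. lookup q m * (if odd_vertices e s m = U then 2 ^ n else 0))"
  proof (rule sum.cong[OF refl])
    fix m
    have "sym_diff U (odd_vertices e s m) \<subseteq> {1..n}" using U ov[of m] by blast
    moreover have "sym_diff U (odd_vertices e s m) = {} \<longleftrightarrow> odd_vertices e s m = U" by blast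
    ultimately show "lookup q m * (\<Sum>x\<in>sign_vectors n. \<Prod>v\<in>sym_diff U (odd_vertices e s m). x v) =
        lookup q m * (if odd_vertices e s m = U then 2 ^ n else 0)"
      by (simp add: sum_sign_vectors_prod)
  qed
  also have "\<dots> = 2 ^ n * ?c"
    unfolding sum_distrib_left by (intro sum.cong refl) simp
  finally have c: "2 ^ n * ?c = 0" by simp
  have two_inverse: "(2::3) ^ n * 2 ^ n = 1"
  proof -
    have "(2 * 2 :: 3) = 1" by simp
    then have "((2::3) * 2) ^ n = 1" by (simp only: power_one)
    then show ?thesis by (simp only: power_mult_distrib)
  qed
  have "?c = (2 ^ n * 2 ^ n) * ?c" using two_inverse by simp
  also have "\<dots> = 0" using c by (simp only: mult.assoc mult_zero_right)
  finally show ?thesis .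
qed

section \<open>Coefficient sums over parity classes\<close>

definition class_coeff :: "(nat \<Rightarrow> nat set) \<Rightarrow> nat \<Rightarrow> nat set \<Rightarrow> nat \<Rightarrow> poly3 \<Rightarrow> 3" where
  "class_coeff e s U d f =
    (\<Sum>m\<in>keys f. if odd_vertices e s m = U \<and> mdeg m = d then lookup f m else 0)"

definition nonsquarefree_class :: "(nat \<Rightarrow> nat set) \<Rightarrow> nat \<Rightarrow> nat set \<Rightarrow> nat \<Rightarrow> bool" where
  "nonsquarefree_class e s U d \<longleftrightarrow>
    (\<exists>m. mon_in_S s m \<and> \<not> squarefree_mon m \<and> odd_vertices e s m = U \<and> mdeg m = d)"

definition squarefree_classes_vanish :: "(nat \<Rightarrow> nat set) \<Rightarrow> nat \<Rightarrow> poly3 \<Rightarrow> bool" where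
  "squarefree_classes_vanish e s f \<longleftrightarrow>
    in_S s f \<and> (\<forall>U d. \<not> nonsquarefree_class e s U d \<longrightarrow> class_coeff e s U d f = 0)"

lemma nonsquarefree_class_shift:
  assumes "nonsquarefree_class e s U d" "mon_in_S s l"
  shows "nonsquarefree_class e s (sym_diff U (odd_vertices e s l)) (d + mdeg l)"
proof -
  obtain m where "mon_in_S s m" "\<not> squarefree_mon m" "odd_vertices e s m = U" "mdeg m = d"
    using assms(1) unfolding nonsquarefree_class_def by blast
  then show ?thesis unfolding nonsquarefree_class_def using assms(2)
    by (intro exI[of _ "m + l"]) (simp add: mon_in_S_add not_squarefree_mon_add odd_vertices_add mdeg_add)
qed

lemma class_coeff_eq_sum:
  "finite M \<Longrightarrow> keys f \<subseteq> M \<Longrightarrow>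
    class_coeff e s U d f = (\<Sum>m\<in>M. if odd_vertices e s m = U \<and> mdeg m = d then lookup f m else 0)"
  unfolding class_coeff_def by (rule sum.mono_neutral_left) (auto simp: in_keys_iff)

lemma class_coeff_add: "class_coeff e s U d (f + g) = class_coeff e s U d f + class_coeff e s U d g"
proof -
  let ?M = "keys f \<union> keys g"
  have "class_coeff e s U d (f + g) =
      (\<Sum>m\<in>?M. if odd_vertices e s m = U \<and> mdeg m = d then lookup (f + g) m else 0)"
    by (rule class_coeff_eq_sum) (use keys_add[of f g] in auto)
  also have "\<dots> = class_coeff e s U d f + class_coeff e s U d g"
    by (simp add: class_coeff_eq_sum[of ?M] sum.distrib[symmetric])
       (rule sum.cong, auto simp: lookup_add)
  finally show ?thesis .
qed

lemma lookup_mult_eq_sum: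
  "lookup (h * f) k = (\<Sum>l\<in>keys h. \<Sum>q\<in>keys f. if k = l + q then lookup h l * lookup f q else 0)"
proof -
  have inner: "Sum_any (\<lambda>q. lookup f q when k = l + q) = (\<Sum>q\<in>keys f. lookup f q when k = l + q)" for l
    by (rule Sum_any.expand_superset) (auto simp: in_keys_iff when_def)
  have "lookup (h * f) k = Sum_any (\<lambda>l. lookup h l * (\<Sum>q\<in>keys f. lookup f q when k = l + q))"
    by (simp add: lookup_mult inner)
  also have "\<dots> = (\<Sum>l\<in>keys h. lookup h l * (\<Sum>q\<in>keys f. lookup f q when k = l + q))"
    by (rule Sum_any.expand_superset) (auto simp: in_keys_iff)
  also have "\<dots> = (\<Sum>l\<in>keys h. \<Sum>q\<in>keys f. if k = l + q then lookup h l * lookup f q else 0)"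
    by (simp add: sum_distrib_left) (intro sum.cong refl, simp add: when_def)
  finally show ?thesis .
qed

lemma class_coeff_mult:
  "class_coeff e s U d (h * f) = (\<Sum>l\<in>keys h. lookup h l *
     (\<Sum>q\<in>keys f. if odd_vertices e s (l + q) = U \<and> mdeg (l + q) = d then lookup f q else 0))"
proof -
  let ?P = "\<lambda>m. odd_vertices e s m = U \<and> mdeg m = d"
  let ?M = "(\<lambda>(l, q). l + q) ` (keys h \<times> keys f)"
  have "class_coeff e s U d (h * f) = (\<Sum>m\<in>?M. if ?P m then lookup (h * f) m else 0)"
    by (rule class_coeff_eq_sum) (use keys_mult[of h f] in auto)
  also have "\<dots> = (\<Sum>m\<in>?M. \<Sum>l\<in>keys h. \<Sum>q\<in>keys f.
      if ?P m \<and> m = l + q then lookup h l * lookup f q else 0)"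
  proof (rule sum.cong[OF refl])
    fix m
    show "(if ?P m then lookup (h * f) m else 0) = (\<Sum>l\<in>keys h. \<Sum>q\<in>keys f.
        if ?P m \<and> m = l + q then lookup h l * lookup f q else 0)"
    proof (cases "?P m")
      case False
      then have z: "(if ?P m \<and> m = l + q then c else 0) = 0" for l q and c :: 3 by auto
      show ?thesis unfolding z using False by auto
    qed (simp add: lookup_mult_eq_sum)
  qed
  also have "\<dots> = (\<Sum>l\<in>keys h. \<Sum>q\<in>keys f. \<Sum>m\<in>?M.
      if ?P m \<and> m = l + q then lookup h l * lookup f q else 0)"
    by (simp add: sum.swap[of _ ?M] sum.swap[of _ ?M "keys f"])
  also have "\<dots> = (\<Sum>l\<in>keys h. \<Sum>q\<in>keys f. if ?P (l + q) then lookup h l * lookup f q else 0)"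
  proof (intro sum.cong refl)
    fix l q assume "l \<in> keys h" "q \<in> keys f"
    then have "l + q \<in> ?M" by blast
    have "(\<Sum>m\<in>?M. if ?P m \<and> m = l + q then lookup h l * lookup f q else 0) =
        (\<Sum>m\<in>?M. if m = l + q then (if ?P (l + q) then lookup h l * lookup f q else 0) else 0)"
      by (rule sum.cong) auto
    also have "\<dots> = (if ?P (l + q) then lookup h l * lookup f q else 0)"
      using \<open>l + q \<in> ?M\<close> by (subst sum.delta) auto
    finally show "(\<Sum>m\<in>?M. if ?P m \<and> m = l + q then lookup h l * lookup f q else 0) =
        (if ?P (l + q) then lookup h l * lookup f q else 0)" .
  qed
  also have "\<dots> = (\<Sum>l\<in>keys h. lookup h l * (\<Sum>q\<in>keys f. if ?P (l + q) then lookup f q else 0))"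
    by (simp add: sum_distrib_left) (intro sum.cong refl, simp)
  finally show ?thesis .
qed

lemma sym_diff_eq_iff: "sym_diff A B = C \<longleftrightarrow> B = sym_diff C A"
  by blast

lemma sym_diff_sym_diff_cancel: "sym_diff (sym_diff A B) B = A"
  by blast

lemma squarefree_classes_vanish_zero: "squarefree_classes_vanish e s 0"
  by (simp add: squarefree_classes_vanish_def class_coeff_def in_S_def)

lemma squarefree_classes_vanish_add:
  "squarefree_classes_vanish e s f \<Longrightarrow> squarefree_classes_vanish e s g \<Longrightarrow>
    squarefree_classes_vanish e s (f + g)"
  unfolding squarefree_classes_vanish_def by (simp add: class_coeff_add in_S_add)

lemma squarefree_classes_vanish_mult:
  assumes h: "in_S s h" and f: "squarefree_classes_vanish e s f"
  shows "squarefree_classes_vanish e s (h * f)"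
proof -
  have "class_coeff e s U d (h * f) = 0" if U: "\<not> nonsquarefree_class e s U d" for U d
  proof -
    have "(\<Sum>q\<in>keys f. if odd_vertices e s (l + q) = U \<and> mdeg (l + q) = d then lookup f q else 0) = 0"
      if "l \<in> keys h" for l
    proof (cases "mdeg l \<le> d")
      case True
      let ?U' = "sym_diff U (odd_vertices e s l)"
      have l: "mon_in_S s l" using h that in_S_iff_mon_in_S by blast
      have "\<not> nonsquarefree_class e s ?U' (d - mdeg l)"
      proof
        assume "nonsquarefree_class e s ?U' (d - mdeg l)"
        from nonsquarefree_class_shift[OF this l] have "nonsquarefree_class e s U d"
          using True by (simp only: sym_diff_sym_diff_cancel le_add_diff_inverse2)
        with U show False ..
      qed
      then have "class_coeff e s ?U' (d - mdeg l) f = 0"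
        using f unfolding squarefree_classes_vanish_def by blast
      moreover have "odd_vertices e s (l + q) = U \<and> mdeg (l + q) = d \<longleftrightarrow>
          odd_vertices e s q = ?U' \<and> mdeg q = d - mdeg l" for q
        using True by (auto simp: odd_vertices_add mdeg_add sym_diff_eq_iff)
      ultimately show ?thesis unfolding class_coeff_def by simp
    next
      case False
      then show ?thesis by (simp add: mdeg_add)
    qed
    then show ?thesis unfolding class_coeff_mult by simp
  qed
  then show ?thesis using in_S_mult h f unfolding squarefree_classes_vanish_def by blast
qed

lemma squarefree_classes_vanish_ideal_in:
  assumes "\<forall>b\<in>B. squarefree_classes_vanish e s b" "f \<in> ideal_in s B"
  shows "squarefree_classes_vanish e s f"
  using assms(2)
  by induction
    (use assms(1) in \<open>auto intro: squarefree_classes_vanish_zero squarefree_classes_vanish_add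
      squarefree_classes_vanish_mult\<close>)

lemma squarefree_classes_vanish_if_vanishing:
  assumes E: "\<forall>k\<in>{1..s}. e k \<subseteq> {1..n}" and q: "in_S s q" "homogeneous q"
    and van: "\<forall>p\<in>toric_points n e s. eval q p = 0"
  shows "squarefree_classes_vanish e s q"
  unfolding squarefree_classes_vanish_def
proof (intro conjI allI impI)
  fix U d
  show "class_coeff e s U d q = 0"
  proof (cases "\<exists>m\<in>keys q. mdeg m = d")
    case True
    then have "\<forall>m\<in>keys q. mdeg m = d" using q(2) unfolding homogeneous_def by metis
    then have "class_coeff e s U d q = (\<Sum>m\<in>keys q. if odd_vertices e s m = U then lookup q m else 0)"
      unfolding class_coeff_def by (intro sum.cong) auto
    then show ?thesis using vanishing_sum_coeffs_odd_vertices[OF E q(1) van] by simp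
  next
    case False
    then show ?thesis unfolding class_coeff_def by (intro sum.neutral) auto
  qed
qed (rule q(1))

lemma squarefree_classes_vanish_var_power2:
  assumes "s \<ge> 1" shows "squarefree_classes_vanish e s (var s ^ 2)"
  unfolding squarefree_classes_vanish_def
proof (intro conjI allI impI)
  let ?a = "Poly_Mapping.single s (2::nat)"
  have "mon_in_S s ?a" "\<not> squarefree_mon ?a"
    using assms by (auto simp: mon_in_S_def squarefree_mon_def intro!: exI[of _ s])
  then have "nonsquarefree_class e s (odd_vertices e s ?a) 2"
    unfolding nonsquarefree_class_def by fastforce
  moreover fix U d assume "\<not> nonsquarefree_class e s U d"
  ultimately have "\<not> (odd_vertices e s ?a = U \<and> mdeg ?a = d)" by auto
  moreover have keys_a: "keys (Poly_Mapping.single ?a (1::3)) = {?a}" by simp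
  ultimately show "class_coeff e s U d (var s ^ 2) = 0"
    unfolding var_power2 class_coeff_def keys_a by simp
qed (use assms in \<open>simp add: var_power2 in_S_def\<close>)

lemma squarefree_classes_vanish_toric_ideal:
  assumes E: "\<forall>k\<in>{1..s}. e k \<subseteq> {1..n}" and s: "s \<ge> 1"
    and f: "f \<in> ideal_in s (vanishing_ideal n e s \<union> {var s ^ 2})"
  shows "squarefree_classes_vanish e s f"
proof (rule squarefree_classes_vanish_ideal_in[OF _ f], intro ballI)
  fix b assume b: "b \<in> vanishing_ideal n e s \<union> {var s ^ 2}"
  have "\<forall>q\<in>{q. in_S s q \<and> homogeneous q \<and> (\<forall>p\<in>toric_points n e s. eval q p = 0)}.
      squarefree_classes_vanish e s q"
    using squarefree_classes_vanish_if_vanishing[OF E] by blast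
  then have "squarefree_classes_vanish e s b" if "b \<in> vanishing_ideal n e s"
    using that unfolding vanishing_ideal_def by (rule squarefree_classes_vanish_ideal_in)
  then show "squarefree_classes_vanish e s b"
    using b squarefree_classes_vanish_var_power2[OF s] by blast
qed

section \<open>Splitting a symmetric difference into an Eulerian binomial\<close>

lemma exists_equal_card_split:
  assumes fin: "finite P" "finite Q" and disj: "P \<inter> Q = {}" and ne: "P \<union> Q \<noteq> {}"
    and le: "card Q \<le> card P" and ev: "even (card P - card Q)"
    and max: "card Q = card P \<Longrightarrow> Max (P \<union> Q) \<in> Q"
  obtains A where "A \<subseteq> P" "A \<noteq> {}" "card A = card (P \<union> Q - A)" "Max (P \<union> Q) \<notin> A"
proof -
  define w where "w = Max (P \<union> Q)"
  obtain k where k: "card P = card Q + 2 * k"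
    using ev le by (metis evenE le_add_diff_inverse)
  have "card Q + k \<le> card (P - {w})"
  proof (cases "w \<in> P")
    case True
    then have "w \<notin> Q" using disj by blast
    then have "k \<noteq> 0" using max k unfolding w_def by auto
    then show ?thesis using True fin k by simp
  next
    case False
    then show ?thesis using k by simp
  qed
  then obtain A where A: "A \<subseteq> P - {w}" "card A = card Q + k"
    by (meson obtain_subset_with_card_n)
  have "card (P \<union> Q - A) = card (P \<union> Q) - card A"
    using A fin by (intro card_Diff_subset) (auto intro: finite_subset)
  also have "\<dots> = card Q + k"
    using A k fin disj by (simp add: card_Un_disjoint)
  finally have "card A = card (P \<union> Q - A)" using A by simp
  moreover have "A \<noteq> {}"
    using A k ne fin by auto
  ultimately show ?thesis using that A unfolding w_def by blast
qed

lemma card_filter_Un_disjoint: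
  "finite A \<Longrightarrow> finite B \<Longrightarrow> A \<inter> B = {} \<Longrightarrow>
    card {k\<in>A \<union> B. P k} = card {k\<in>A. P k} + card {k\<in>B. P k}"
  by (subst card_Un_disjoint[symmetric]) (auto intro: arg_cong[where f = card])

lemma even_card_filter_sym_diff_iff:
  assumes "finite C" "finite D"
  shows "even (card {k\<in>sym_diff C D. P k}) \<longleftrightarrow>
    (even (card {k\<in>C. P k}) \<longleftrightarrow> even (card {k\<in>D. P k}))"
proof -
  have "C = (C - D) \<union> (C \<inter> D)" "D = (D - C) \<union> (C \<inter> D)" by auto
  then have "card {k\<in>C. P k} = card {k\<in>C - D. P k} + card {k\<in>C \<inter> D. P k}"
    "card {k\<in>D. P k} = card {k\<in>D - C. P k} + card {k\<in>C \<inter> D. P k}"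
    using assms card_filter_Un_disjoint[of "C - D" "C \<inter> D" P] card_filter_Un_disjoint[of "D - C" "C \<inter> D" P]
    by auto
  moreover have "card {k\<in>sym_diff C D. P k} = card {k\<in>C - D. P k} + card {k\<in>D - C. P k}"
    using assms by (intro card_filter_Un_disjoint) auto
  ultimately show ?thesis by auto
qed

lemma grevlex_less_mon_of_set_iff:
  assumes fin: "finite C" "finite D" and card: "card C = card D" and "C \<noteq> D"
  shows "grevlex_less (mon_of_set D) (mon_of_set C) \<longleftrightarrow> Max (sym_diff C D) \<in> D"
proof -
  let ?M = "Max (sym_diff C D)"
  have fin_W: "finite (sym_diff C D)" and "sym_diff C D \<noteq> {}" using fin \<open>C \<noteq> D\<close> by auto
  then have M: "?M \<in> sym_diff C D" by (rule Max_in)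
  have above: "\<forall>j>?M. j \<notin> sym_diff C D"
    using Max_ge[OF fin_W] leD by blast
  have "mdeg (mon_of_set D) = mdeg (mon_of_set C)" using fin card by (simp add: mdeg_mon_of_set)
  then have "grevlex_less (mon_of_set D) (mon_of_set C) \<longleftrightarrow>
      (\<exists>k. k \<in> D \<and> k \<notin> C \<and> (\<forall>j>k. j \<notin> sym_diff C D))"
    unfolding grevlex_less_def using fin by (simp add: lookup_mon_of_set) blast
  also have "\<dots> \<longleftrightarrow> ?M \<in> D"
  proof
    assume "\<exists>k. k \<in> D \<and> k \<notin> C \<and> (\<forall>j>k. j \<notin> sym_diff C D)"
    then obtain k where k: "k \<in> D" "k \<notin> C" "\<forall>j>k. j \<notin> sym_diff C D" by blast
    then have "k = ?M" using M above Max_ge[OF fin_W, of k] by (metis DiffI UnI2 linorder_neqE_nat)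
    then show "?M \<in> D" using k by simp
  qed (use M above in blast)
  finally show ?thesis .
qed

lemma binomial_in_vanishing_ideal:
  assumes a: "mon_in_S s a" and b: "mon_in_S s b" and deg: "mdeg a = mdeg b"
    and eq: "\<forall>p\<in>toric_points n e s. mon_eval a p = mon_eval b p"
  shows "Poly_Mapping.single a (1::3) - Poly_Mapping.single b 1 \<in> vanishing_ideal n e s"
  unfolding vanishing_ideal_def
proof (rule ideal_in.gen, cases "a = b")
  case False
  let ?g = "Poly_Mapping.single a (1::3) - Poly_Mapping.single b 1"
  have keys_g: "keys ?g = {a, b}" using keys_binomial[OF False] .
  have "eval ?g p = 0" if "p \<in> toric_points n e s" for p
  proof -
    have "eval ?g p = (\<Sum>m\<in>{a, b}. lookup ?g m * mon_eval m p)"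
      by (rule eval_eq_sum) (simp_all add: keys_g)
    also have "\<dots> = mon_eval a p - mon_eval b p"
      using False by (simp add: lookup_minus lookup_single when_def)
    finally show ?thesis using eq that by simp
  qed
  then show "?g \<in> {f. in_S s f \<and> homogeneous f \<and> (\<forall>p\<in>toric_points n e s. eval f p = 0)}"
    using a b deg by (simp add: in_S_iff_mon_in_S homogeneous_def keys_g)
qed (simp add: in_S_def homogeneous_def eval_def)

lemma var_power2_diff_in_vanishing_ideal:
  assumes E: "\<forall>k\<in>{1..s}. e k \<subseteq> {1..n}" and "i \<in> {1..s}" "j \<in> {1..s}"
  shows "var i ^ 2 - var j ^ 2 \<in> vanishing_ideal n e s"
proof -
  have "mon_eval (Poly_Mapping.single k 2) p = 1"
    if k: "k \<in> {1..s}" and p: "p \<in> toric_points n e s" for k p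
  proof -
    obtain x where x: "p = edge_point e x" "\<forall>v\<in>{1..n}. x v ^ 2 = 1"
      using toric_pointsE[OF p] .
    have "mon_eval (Poly_Mapping.single k 2) p = (\<Prod>v\<in>e k. x v ^ 2)"
      unfolding mon_eval_def x(1) edge_point_def by (simp add: prod_power_distrib)
    also have "\<dots> = 1" using E k x(2) by (intro prod.neutral) blast
    finally show ?thesis .
  qed
  then show ?thesis unfolding var_power2
    by (intro binomial_in_vanishing_ideal) (use assms in \<open>auto simp: mon_in_S_def\<close>)
qed

lemma eulerian_binomial_in_vanishing_ideal:
  assumes E: "\<forall>k\<in>{1..s}. e k \<subseteq> {1..n}" and g: "g \<in> eulerian_binomials n e s"
  shows "g \<in> vanishing_ideal n e s"
proof -
  obtain A B where g: "g = (\<Prod>i\<in>A. var i) - (\<Prod>i\<in>B. var i)"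
    and AB: "A \<subseteq> {1..s}" "B \<subseteq> {1..s}" "A \<inter> B = {}" "card A = card B"
    and euler: "\<forall>v. even (card {k\<in>A \<union> B. v \<in> e k})"
    using g unfolding eulerian_binomials_def by blast
  have fin: "finite A" "finite B" using AB(1,2) finite_subset by blast+
  have mon_in_S: "mon_in_S s (mon_of_set A)" "mon_in_S s (mon_of_set B)"
    using AB fin by (auto simp: mon_in_S_def keys_mon_of_set)
  have "odd_vertices e s (mon_of_set A) = odd_vertices e s (mon_of_set B)"
  proof -
    have "odd (card {k\<in>A. v \<in> e k}) \<longleftrightarrow> odd (card {k\<in>B. v \<in> e k})" for v
      using euler[rule_format, of v] card_filter_Un_disjoint[OF fin AB(3)] by auto
    then show ?thesis using odd_vertices_mon_of_set[OF AB(1)] odd_vertices_mon_of_set[OF AB(2)] by blast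
  qed
  then have "\<forall>p\<in>toric_points n e s. mon_eval (mon_of_set A) p = mon_eval (mon_of_set B) p"
    by (metis E mon_eval_edge_point mon_in_S toric_pointsE)
  moreover have "mdeg (mon_of_set A) = mdeg (mon_of_set B)"
    using fin AB(4) by (simp add: mdeg_mon_of_set)
  ultimately show ?thesis
    unfolding g prod_var_eq_single[OF fin(1)] prod_var_eq_single[OF fin(2)]
    using binomial_in_vanishing_ideal mon_in_S by blast
qed

section \<open>Leading monomials\<close>

lemma squarefree_classes_vanish_partner:
  assumes f: "squarefree_classes_vanish e s f" and m: "m \<in> keys f"
    and nonsq: "\<not> nonsquarefree_class e s (odd_vertices e s m) (mdeg m)"
  obtains m' where "m' \<in> keys f" "m' \<noteq> m" "odd_vertices e s m' = odd_vertices e s m" "mdeg m' = mdeg m"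
proof (rule ccontr)
  assume "\<not> thesis"
  with that have "class_coeff e s (odd_vertices e s m) (mdeg m) f = (\<Sum>m'\<in>keys f. if m' = m then lookup f m else 0)"
    unfolding class_coeff_def by (intro sum.cong) auto
  also have "\<dots> = lookup f m" using m by simp
  finally show False using f nonsq m unfolding squarefree_classes_vanish_def by (simp add: in_keys_iff)
qed

lemma squarefree_lead_mon_exchange:
  assumes f: "squarefree_classes_vanish e s f" "f \<noteq> 0" and sq: "squarefree_mon (lead_mon f)"
  defines "C \<equiv> keys (lead_mon f)"
  obtains D where "D \<subseteq> {1..s}" "C \<noteq> D" "card D \<le> card C" "even (card C - card D)"
    "card D = card C \<Longrightarrow> Max (sym_diff C D) \<in> D"
    "\<forall>v. even (card {k\<in>C. v \<in> e k}) \<longleftrightarrow> even (card {k\<in>D. v \<in> e k})"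
proof -
  let ?m = "lead_mon f"
  have m: "?m \<in> keys f" using lead_mon_in_keys[OF f(2)] .
  have in_S: "in_S s f" using f(1) unfolding squarefree_classes_vanish_def ..
  then have m_S: "mon_in_S s ?m" using m in_S_iff_mon_in_S by blast
  have fin: "finite C" by (simp add: C_def)
  have m_eq: "?m = mon_of_set C" using squarefree_mon_eq_mon_of_set[OF sq] by (simp add: C_def)
  have odd_exp: "odd_exponents s ?m = C" using odd_exponents_squarefree[OF m_S sq] by (simp add: C_def)
  have card_C: "card C = mdeg ?m" by (simp add: m_eq mdeg_mon_of_set fin)
  show ?thesis
  proof (cases "nonsquarefree_class e s (odd_vertices e s ?m) (mdeg ?m)")
    case True
    then obtain m' where m': "mon_in_S s m'" "\<not> squarefree_mon m'"
      "odd_vertices e s m' = odd_vertices e s ?m" "mdeg m' = mdeg ?m"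
      unfolding nonsquarefree_class_def by blast
    let ?D = "odd_exponents s m'"
    have "card ?D < card C" using card_odd_exponents_less[OF m'(1,2)] m'(4) card_C by simp
    moreover have "even (card C - card ?D)"
      using even_mdeg_iff[OF m'(1)] m'(4) card_C \<open>card ?D < card C\<close> by (simp add: even_diff_nat)
    moreover have "\<forall>v. even (card {k\<in>C. v \<in> e k}) \<longleftrightarrow> even (card {k\<in>?D. v \<in> e k})"
      using odd_vertices_eq_imp_parities_eq[OF m'(3)[symmetric]] odd_exp by simp
    moreover have "?D \<subseteq> {1..s}" unfolding odd_exponents_def by blast
    ultimately show ?thesis by (intro that[of ?D]) auto
  next
    case False
    then obtain m' where m': "m' \<in> keys f" "m' \<noteq> ?m"
      "odd_vertices e s m' = odd_vertices e s ?m" "mdeg m' = mdeg ?m"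
      using squarefree_classes_vanish_partner[OF f(1) m] by blast
    have m'_S: "mon_in_S s m'" using m'(1) in_S in_S_iff_mon_in_S by blast
    have sq': "squarefree_mon m'" using False m' m'_S unfolding nonsquarefree_class_def by blast
    define D where "D = keys m'"
    have fin_D: "finite D" by (simp add: D_def)
    have m'_eq: "m' = mon_of_set D" using squarefree_mon_eq_mon_of_set[OF sq'] by (simp add: D_def)
    have card: "card D = card C" using m'(4) card_C fin_D by (simp add: m'_eq mdeg_mon_of_set)
    have "C \<noteq> D" using m'(2) m_eq m'_eq by auto
    moreover have "Max (sym_diff C D) \<in> D"
      using lead_mon_greatest[OF f(2) m'(1,2)] grevlex_less_mon_of_set_iff[OF fin fin_D card[symmetric] \<open>C \<noteq> D\<close>]
      by (simp add: m_eq m'_eq)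
    moreover have "\<forall>v. even (card {k\<in>C. v \<in> e k}) \<longleftrightarrow> even (card {k\<in>D. v \<in> e k})"
      using odd_vertices_eq_imp_parities_eq[OF m'(3)[symmetric]] odd_exp
        odd_exponents_squarefree[OF m'_S sq'] by (simp add: D_def)
    moreover have "D \<subseteq> {1..s}" using m'_S by (simp add: D_def mon_in_S_def)
    ultimately show ?thesis using that card by simp
  qed
qed

lemma lead_mon_prod_var_diff:
  assumes fin: "finite A" "finite B" and "A \<inter> B = {}" "A \<noteq> {}" "card A = card B"
    and "Max (A \<union> B) \<in> B"
  shows "(\<Prod>i\<in>A. var i) - (\<Prod>i\<in>B. var i) \<noteq> 0"
    and "lead_mon ((\<Prod>i\<in>A. var i) - (\<Prod>i\<in>B. var i)) = mon_of_set A"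
proof -
  have "A \<noteq> B" using assms by blast
  then have ne: "mon_of_set A \<noteq> mon_of_set B" using fin keys_mon_of_set by metis
  have "sym_diff A B = A \<union> B" using assms by blast
  then have "grevlex_less (mon_of_set B) (mon_of_set A)"
    using grevlex_less_mon_of_set_iff[OF fin \<open>card A = card B\<close> \<open>A \<noteq> B\<close>] assms by simp
  then show "(\<Prod>i\<in>A. var i) - (\<Prod>i\<in>B. var i) \<noteq> 0"
    and "lead_mon ((\<Prod>i\<in>A. var i) - (\<Prod>i\<in>B. var i)) = mon_of_set A"
    using binomial_nonzero[OF ne] lead_mon_binomial[OF ne] by (simp_all add: prod_var_eq_single fin)
qed

lemma lead_mon_dvd_squarefree:
  assumes f: "squarefree_classes_vanish e s f" "f \<noteq> 0" and sq: "squarefree_mon (lead_mon f)"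
  shows "\<exists>g\<in>eulerian_binomials n e s. g \<noteq> 0 \<and> mon_dvd (lead_mon g) (lead_mon f)"
proof -
  define C where "C = keys (lead_mon f)"
  obtain D where D: "D \<subseteq> {1..s}" "C \<noteq> D" "card D \<le> card C" "even (card C - card D)"
    "card D = card C \<Longrightarrow> Max (sym_diff C D) \<in> D"
    and parity: "\<forall>v. even (card {k\<in>C. v \<in> e k}) \<longleftrightarrow> even (card {k\<in>D. v \<in> e k})"
    using squarefree_lead_mon_exchange[OF f sq] unfolding C_def by blast
  have fin: "finite C" "finite D" using D(1) finite_subset by (auto simp: C_def)
  have C_S: "C \<subseteq> {1..s}"
    using lead_mon_in_keys[OF f(2)] f(1) unfolding C_def squarefree_classes_vanish_def in_S_def by blast
  have card: "card C = card (C \<inter> D) + card (C - D)" "card D = card (C \<inter> D) + card (D - C)"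
    using card_Int_Diff[OF fin(1), of D] card_Int_Diff[OF fin(2), of C] by (simp_all add: Int_commute)
  obtain A where A: "A \<subseteq> C - D" "A \<noteq> {}" "card A = card (sym_diff C D - A)" "Max (sym_diff C D) \<notin> A"
  proof (rule exists_equal_card_split[of "C - D" "D - C"])
    show "card (D - C) = card (C - D) \<Longrightarrow> Max (C - D \<union> (D - C)) \<in> D - C"
      using D(5) card Max_in[of "sym_diff C D"] fin D(2) by auto
  qed (use fin D card in auto)
  define B where "B = sym_diff C D - A"
  have AB: "A \<inter> B = {}" "A \<union> B = sym_diff C D" using A(1) by (auto simp: B_def)
  have fin_AB: "finite A" "finite B" using fin AB(2) by (metis finite_Un finite_Diff)+
  have max_B: "Max (A \<union> B) \<in> B"
    using AB(2) A(4) Max_in[of "sym_diff C D"] fin D(2) by auto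
  let ?g = "(\<Prod>i\<in>A. var i) - (\<Prod>i\<in>B. var i)"
  have "\<forall>v. even (card {k\<in>A \<union> B. v \<in> e k})"
    using parity even_card_filter_sym_diff_iff[OF fin] by (simp add: AB(2))
  moreover have "A \<subseteq> {1..s}" "B \<subseteq> {1..s}" using A(1) AB(2) C_S D(1) by auto
  ultimately have "?g \<in> eulerian_binomials n e s"
    unfolding eulerian_binomials_def
    by (intro CollectI exI[of _ A] exI[of _ B] conjI refl) (use AB(1) A(3) in \<open>simp_all add: B_def\<close>)
  moreover note lead_mon_prod_var_diff[OF fin_AB AB(1) A(2) A(3)[folded B_def] max_B]
  moreover have "mon_dvd (mon_of_set A) (lead_mon f)"
    using A(1) fin_AB unfolding mon_dvd_def C_def
    by (auto simp: lookup_mon_of_set in_keys_iff Suc_le_eq)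
  ultimately show ?thesis by (intro bexI[of _ ?g]) simp_all
qed

lemma lead_mon_dvd_nonsquarefree:
  assumes s: "s \<ge> 1" and m: "mon_in_S s m" "\<not> squarefree_mon m"
  shows "\<exists>g\<in>T_set s \<union> {var s ^ 2}. g \<noteq> 0 \<and> mon_dvd (lead_mon g) m"
proof -
  obtain i where i: "lookup m i > 1" using m(2) unfolding squarefree_mon_def by (auto simp: not_le)
  then have "i \<in> keys m" by (auto simp: in_keys_iff)
  then have "i \<in> {1..s}" using m(1) unfolding mon_in_S_def by blast
  have dvd: "mon_dvd (Poly_Mapping.single i 2) m"
    using i unfolding mon_dvd_def by (simp add: lookup_single when_def)
  show ?thesis
  proof (cases "i = s")
    case True
    have "keys (var s ^ 2) = {Poly_Mapping.single s 2}" by (simp add: var_power2)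
    then have "var s ^ 2 \<noteq> 0" by auto
    moreover have "lead_mon (var s ^ 2) = Poly_Mapping.single s 2"
      by (simp add: var_power2 lead_mon_single)
    ultimately show ?thesis using dvd True by (intro bexI[of _ "var s ^ 2"]) simp_all
  next
    case False
    let ?a = "Poly_Mapping.single i (2::nat)" and ?b = "Poly_Mapping.single s (2::nat)"
    have ne: "?a \<noteq> ?b" using False by (metis lookup_single_eq lookup_single_not_eq zero_neq_numeral)
    have "grevlex_less ?b ?a"
      unfolding grevlex_less_def using False \<open>i \<in> {1..s}\<close>
      by (auto simp: lookup_single when_def intro!: exI[of _ s])
    then have "var i ^ 2 - var s ^ 2 \<noteq> 0" "lead_mon (var i ^ 2 - var s ^ 2) = ?a"
      unfolding var_power2 using binomial_nonzero[OF ne] lead_mon_binomial[OF ne] by simp_all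
    moreover have "var i ^ 2 - var s ^ 2 \<in> T_set s"
      unfolding T_set_def using \<open>i \<in> {1..s}\<close> s by (intro CollectI exI[of _ i] exI[of _ s]) simp
    ultimately show ?thesis using dvd by (intro bexI[of _ "var i ^ 2 - var s ^ 2"]) simp_all
  qed
qed

theorem proposition2p3:
  fixes n s :: nat and e :: "nat \<Rightarrow> nat set"
  assumes "s \<ge> 1"
    and "\<forall>k\<in>{1..s}. e k \<subseteq> {1..n} \<and> card (e k) = 2"
    and "inj_on e {1..s}"
  shows "is_groebner_basis (T_set s \<union> eulerian_binomials n e s \<union> {var s ^ 2})
           (ideal_in s (vanishing_ideal n e s \<union> {var s ^ 2}))"
proof -
  have E: "\<forall>k\<in>{1..s}. e k \<subseteq> {1..n}" using assms(2) by blast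
  let ?J = "ideal_in s (vanishing_ideal n e s \<union> {var s ^ 2})"
  have "vanishing_ideal n e s \<subseteq> ?J" "var s ^ 2 \<in> ?J" by (auto intro: ideal_in.gen)
  then have "T_set s \<union> eulerian_binomials n e s \<union> {var s ^ 2} \<subseteq> ?J"
    using var_power2_diff_in_vanishing_ideal[OF E] eulerian_binomial_in_vanishing_ideal[OF E]
    unfolding T_set_def by blast
  moreover have "\<exists>g\<in>T_set s \<union> eulerian_binomials n e s \<union> {var s ^ 2}.
      g \<noteq> 0 \<and> mon_dvd (lead_mon g) (lead_mon f)" if f: "f \<in> ?J" "f \<noteq> 0" for f
  proof -
    have vanish: "squarefree_classes_vanish e s f"
      using squarefree_classes_vanish_toric_ideal[OF E assms(1) f(1)] .
    then have "mon_in_S s (lead_mon f)"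
      using lead_mon_in_keys[OF f(2)] unfolding squarefree_classes_vanish_def in_S_iff_mon_in_S by blast
    then show ?thesis
      using lead_mon_dvd_nonsquarefree[OF assms(1)] lead_mon_dvd_squarefree[OF vanish f(2)] by blast
  qed
  ultimately show ?thesis unfolding is_groebner_basis_def by blast
qed

end
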